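(* Let $K$ be a discrete hypergroup, let $\mu$ be the left Haar measure on $K$ given by $\mu(\{x\})=\dfrac{1}{(\delta_x*\delta_{x^-})(\{e\})}$ for $x\in K$, and let $p\geq1$. Then for each $g\in L^p(K,\mu)$, the set $$\big\{f\in L^p(K,\mu):\ |f|\geq|g|\big\}$$ is not $\sigma$-porous in $L^p(K,\mu)$.
   Context: A locally compact hypergroup is a locally compact Hausdorff space $K$ together with a bilinear, positive-continuous map $(\mu,\nu)\mapsto\mu*\nu$ on the space $\mathbb M(K)$ of regular complex Borel measures and an involutive homeomorphism $x\mapsto x^-$ of $K$ such that: (i) $(\mathbb M(K),* )$ is a complex associative algebra; (ii) for $x,y\in K$, $\delta_x*\delta_y$ is a probability measure with compact support ($\delta_x$ = Dirac measure); (iii) $(x,y)\mapsto\operatorname{supp}(\delta_x*\delta_y)$ is continuous into the nonempty compact subsets of $K$ with the Michael topology; (iv) there is $e\in K$ with $\delta_x*\delta_e=\delta_e*\delta_x=\delta_x$ for all $x$; (v) $e\in\operatorname{supp}(\delta_x*\delta_y)$ iff $x=y^-$. $K$ is discrete if its topology is discrete. Porosity: Let $X$ be a metric space and $0<\lambda<1$. A set $E\subseteq X$ is $\lambda$-porous at $x\in E$ if for each $\delta>0$ there is $y\in B(x;\delta)\setminus\{x\}$ with $B(y;\lambda\, d(x,y))\cap E=\varnothing$; $E$ is $\lambda$-porous if it is $\lambda$-porous at each of its points; $E$ is $\sigma$-$\lambda$-porous if it is a countable union of $\lambda$-porous subsets of $X$. A set is called $\sigma$-porous if it is $\sigma$-$\lambda$-porous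 for some $\lambda\in(0,1)$; "not $\sigma$-porous" means not $\sigma$-$\lambda$-porous for any $\lambda\in(0,1)$. *)

theory Defs
  imports "HOL-Analysis.Analysis"
begin

text \<open>Since K is discrete, a regular
complex Borel measure on K is a summable function on K, and the convolution on M(K),
being bilinear and positive-continuous, is determined by the products of Dirac measures.
We record these by structure constants: c x y z = (delta_x * delta_y)({z}).
Compact support in a discrete space means finite support; continuity conditions and
local compactness / Hausdorffness are automatic for the discrete topology.\<close>

definition discrete_hypergroup ::
  "('a \<Rightarrow> 'a \<Rightarrow> 'a \<Rightarrow> real) \<Rightarrow> ('a \<Rightarrow> 'a) \<Rightarrow> 'a \<Rightarrow> bool" where
  "discrete_hypergroup c iv e \<longleftrightarrow>
     (\<forall>x y z. 0 \<le> c x y z) \<and>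
     (\<forall>x y. finite {z. c x y z \<noteq> 0}) \<and>
     (\<forall>x y. (\<Sum>z\<in>{z. c x y z \<noteq> 0}. c x y z) = 1) \<and>
     (\<forall>x y z t. (\<Sum>w\<in>{w. c x y w \<noteq> 0}. c x y w * c w z t)
              = (\<Sum>w\<in>{w. c y z w \<noteq> 0}. c y z w * c x w t)) \<and>
     (\<forall>x. iv (iv x) = x) \<and>
     (\<forall>x z. c x e z = (if z = x then 1 else 0)) \<and>
     (\<forall>x z. c e x z = (if z = x then 1 else 0)) \<and>
     (\<forall>x y. c x y e \<noteq> 0 \<longleftrightarrow> x = iv y)"

definition haar_weight :: "('a \<Rightarrow> 'a \<Rightarrow> 'a \<Rightarrow> real) \<Rightarrow> ('a \<Rightarrow> 'a) \<Rightarrow> 'a \<Rightarrow> 'a \<Rightarrow> real" where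
  "haar_weight c iv e x = 1 / c x (iv x) e"

text \<open>L^p(K, mu) for a purely atomic measure with positive atoms w(x): functions
K \<rightarrow> complex with sum |f x|^p w x finite (a.e.-classes are singletons), with the
metric induced by the L^p norm.\<close>
definition lp_space :: "('a \<Rightarrow> real) \<Rightarrow> real \<Rightarrow> ('a \<Rightarrow> complex) set" where
  "lp_space w p = {f. (\<lambda>x. norm (f x) powr p * w x) summable_on UNIV}"

definition lp_dist :: "('a \<Rightarrow> real) \<Rightarrow> real \<Rightarrow> ('a \<Rightarrow> complex) \<Rightarrow> ('a \<Rightarrow> complex) \<Rightarrow> real" where
  "lp_dist w p f g = (\<Sum>\<^sub>\<infinity>x. norm (f x - g x) powr p * w x) powr (1 / p)"

definition lambda_porous_at ::
  "('b \<Rightarrow> 'b \<Rightarrow> real) \<Rightarrow> 'b set \<Rightarrow> real \<Rightarrow> 'b set \<Rightarrow> 'b \<Rightarrow> bool" where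
  "lambda_porous_at d X lam E x \<longleftrightarrow>
     (\<forall>\<delta>>0. \<exists>y\<in>X. d x y < \<delta> \<and> y \<noteq> x \<and>
        {z\<in>X. d y z < lam * d x y} \<inter> E = {})"

definition lambda_porous :: "('b \<Rightarrow> 'b \<Rightarrow> real) \<Rightarrow> 'b set \<Rightarrow> real \<Rightarrow> 'b set \<Rightarrow> bool" where
  "lambda_porous d X lam E \<longleftrightarrow> (\<forall>x\<in>E. lambda_porous_at d X lam E x)"

definition sigma_lambda_porous :: "('b \<Rightarrow> 'b \<Rightarrow> real) \<Rightarrow> 'b set \<Rightarrow> real \<Rightarrow> 'b set \<Rightarrow> bool" where
  "sigma_lambda_porous d X lam E \<longleftrightarrow>
     (\<exists>A :: nat \<Rightarrow> 'b set. (\<forall>n. A n \<subseteq> X \<and> lambda_porous d X lam (A n)) \<and> E = (\<Union>n. A n))"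

definition sigma_porous :: "('b \<Rightarrow> 'b \<Rightarrow> real) \<Rightarrow> 'b set \<Rightarrow> 'b set \<Rightarrow> bool" where
  "sigma_porous d X E \<longleftrightarrow> (\<exists>lam. 0 < lam \<and> lam < 1 \<and> sigma_lambda_porous d X lam E)"

end

theory Submission
  imports Defs
begin

text \<open>
  For \<open>|g| \<le> h \<le> |c|\<close>, the part of the closed ball around \<open>c\<close> where \<open>|u| \<ge> h\<close> is closed
  and lies inside \<open>{f. |f| \<ge> |g|}\<close>. Given such a piece and a \<open>\<lambda>\<close>-porous set \<open>A\<close>, there is
  a smaller piece missing \<open>A\<close>: first push \<open>c\<close> radially outwards by a small margin; if a point
  \<open>a \<in> A\<close> still lies in the enlarged piece, porosity at \<open>a\<close> yields a hole centred at some
  \<open>y\<close> near \<open>a\<close>. Because \<open>|a|\<close> exceeds \<open>h\<close> by the margin, raising the modulus of \<open>y\<close> to \<open>h\<close>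
  moves it by at most \<open>\<lambda>/(1+\<lambda>)\<close> times \<open>d(a,y)\<close>, so a small piece around the raised
  point fits into the hole. Doing this successively against the porous sets \<open>A\<^sub>k\<close> of a
  putative decomposition and applying Cantor's intersection theorem in the complete space
  \<open>\<ell>\<^sup>p\<close> produces a point with \<open>|f| \<ge> |g|\<close> outside every \<open>A\<^sub>k\<close>.
\<close>

lemma convex_powr_combination_le:
  fixes a b s t p :: real
  assumes "1 \<le> p" "0 \<le> a" "0 \<le> b" "a + b = 1" "0 \<le> s" "0 \<le> t"
  shows "(a * s + b * t) powr p \<le> a * s powr p + b * t powr p"
proof -
  have scaled: "(k * x) powr p \<le> k * x powr p" if "0 \<le> k" "k \<le> 1" "0 \<le> x" for k x :: real
  proof (cases "k = 0")
    case False
    then have "k powr p \<le> k powr 1" using that assms(1) by (intro powr_mono') auto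
    then show ?thesis using that by (simp add: powr_mult mult_right_mono)
  qed (use assms in simp)
  consider "s = 0" | "t = 0" | "0 < s" "0 < t" using assms by linarith
  then show ?thesis
  proof cases
    case 1 then show ?thesis using scaled[of b t] assms by simp
  next
    case 2 then show ?thesis using scaled[of a s] assms by simp
  next
    case 3 then show ?thesis
      using powr_convex[OF assms(1)] assms unfolding convex_on_def by auto
  qed
qed

lemma norm_rcis_Arg_diff: "norm (rcis s (Arg z) - z) = \<bar>s - norm z\<bar>"
proof -
  have "rcis s (Arg z) - z = rcis (s - norm z) (Arg z)"
    by (subst (2) rcis_cmod_Arg[symmetric]) (simp add: rcis_def algebra_simps)
  then show ?thesis by simp
qed

lemma summand_le_infsum:
  fixes f :: "'a \<Rightarrow> real"
  assumes "f summable_on UNIV" "\<And>x. 0 \<le> f x"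
  shows "f x \<le> infsum f UNIV"
  using finite_sum_le_infsum[OF assms(1), of "{x}"] assms(2) by simp

lemma powr_add_le_convex_split:
  fixes s t A B p :: real
  assumes "1 \<le> p" "0 < A" "0 < B" "0 \<le> s" "0 \<le> t"
  shows "(s + t) powr p \<le> (A + B) powr p * (A / (A + B) * (s / A) powr p + B / (A + B) * (t / B) powr p)"
proof -
  have "A / (A + B) * (s / A) = s / (A + B)" "B / (A + B) * (t / B) = t / (A + B)"
    using assms by simp_all
  then have "A / (A + B) * (s / A) + B / (A + B) * (t / B) = (s + t) / (A + B)"
    by (simp add: add_divide_distrib)
  then have "s + t = (A + B) * (A / (A + B) * (s / A) + B / (A + B) * (t / B))"
    using assms by simp
  then have "(s + t) powr p = (A + B) powr p * (A / (A + B) * (s / A) + B / (A + B) * (t / B)) powr p"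
    using assms by (metis powr_mult add_nonneg_nonneg less_imp_le)
  also have "\<dots> \<le> (A + B) powr p * (A / (A + B) * (s / A) powr p + B / (A + B) * (t / B) powr p)"
    using assms by (intro mult_left_mono convex_powr_combination_le) (auto simp: add_divide_distrib[symmetric])
  finally show ?thesis .
qed

lemma summable_on_small_tail:
  fixes H :: "'a \<Rightarrow> real"
  assumes H: "H summable_on UNIV" "\<And>x. 0 \<le> H x" and "0 < e"
  obtains S where "finite S" "\<And>F. finite F \<Longrightarrow> sum H (F - S) \<le> e"
proof -
  have "\<forall>\<^sub>F S in finite_subsets_at_top UNIV. dist (sum H S) (infsum H UNIV) < e"
    using infsum_tendsto[OF H(1)] \<open>0 < e\<close> unfolding tendsto_iff by blast
  then obtain S where S: "finite S" "dist (sum H S) (infsum H UNIV) < e"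
    unfolding eventually_finite_subsets_at_top by blast
  have "sum H (F - S) \<le> e" if "finite F" for F
  proof -
    have tail: "H summable_on (UNIV - S)"
      using H(1) by (rule summable_on_subset_banach) auto
    have "sum H (F - S) \<le> infsum H (UNIV - S)"
      using that by (intro finite_sum_le_infsum tail H(2)) auto
    also have "\<dots> = infsum H UNIV - sum H S"
      using S(1) H(1) by (subst infsum_Diff) auto
    finally show ?thesis using S(2) by (simp add: dist_real_def)
  qed
  with S(1) show ?thesis using that by blast
qed

lemma nonneg_summable_infsum_le:
  fixes f :: "'a \<Rightarrow> real"
  assumes "\<And>x. 0 \<le> f x" "\<And>F. finite F \<Longrightarrow> sum f F \<le> B"
  shows "f summable_on UNIV \<and> infsum f UNIV \<le> B"
proof -
  have "f summable_on UNIV"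
    by (rule nonneg_bdd_above_summable_on) (use assms in \<open>auto intro!: bdd_aboveI2[where M=B]\<close>)
  then show ?thesis using infsum_le_finite_sums assms(2) by blast
qed

lemma modulus_deficit_le:
  fixes a y :: complex
  assumes "1 \<le> \<kappa>" "0 \<le> h" "(\<kappa> + 1) * h \<le> norm a"
  shows "h - norm y \<le> 1 / \<kappa> * norm (a - y)"
proof -
  have "\<kappa> * (h - norm y) \<le> norm a - norm y"
    using assms mult_right_mono[of 1 \<kappa> "norm y"] by (simp add: algebra_simps)
  also have "\<dots> \<le> norm (a - y)" by (rule norm_triangle_ineq2)
  finally show ?thesis using assms(1) by (simp add: field_simps)
qed

lemma (in Metric_space) not_sigma_lambda_porous_if_shrinking:
  assumes "mcomplete" and "F\<^sub>0 \<in> \<F>" "F\<^sub>0 \<subseteq> E"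
    and closed: "\<And>F. F \<in> \<F> \<Longrightarrow> closedin mtopology F"
    and nonempty: "\<And>F. F \<in> \<F> \<Longrightarrow> F \<noteq> {}"
    and shrink: "\<And>F A \<epsilon>. F \<in> \<F> \<Longrightarrow> lambda_porous d M lam A \<Longrightarrow> 0 < \<epsilon> \<Longrightarrow>
                   \<exists>F'\<in>\<F>. F' \<subseteq> F \<and> F' \<inter> A = {} \<and> (\<exists>a. F' \<subseteq> mcball a \<epsilon>)"
  shows "\<not> sigma_lambda_porous d M lam E"
proof
  assume "sigma_lambda_porous d M lam E"
  then obtain A :: "nat \<Rightarrow> 'a set" where A: "\<forall>k. A k \<subseteq> M \<and> lambda_porous d M lam (A k)" and E: "E = (\<Union>k. A k)"
    unfolding sigma_lambda_porous_def by blast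
  then have porous: "lambda_porous d M lam (A k)" for k by blast
  define next_set where "next_set k F =
    (SOME F'. F' \<in> \<F> \<and> F' \<subseteq> F \<and> F' \<inter> A k = {} \<and> (\<exists>a. F' \<subseteq> mcball a (1 / Suc k)))" for k F
  have next_set: "next_set k F \<in> \<F> \<and> next_set k F \<subseteq> F \<and> next_set k F \<inter> A k = {} \<and>
      (\<exists>a. next_set k F \<subseteq> mcball a (1 / Suc k))" if "F \<in> \<F>" for k F
    unfolding next_set_def by (rule someI_ex, rule bexE[OF shrink[OF that porous]]) auto
  define C where "C = rec_nat F\<^sub>0 next_set"
  have C_Suc: "C (Suc k) = next_set k (C k)" for k by (simp add: C_def)
  have C_in: "C k \<in> \<F>" for k
    by (induction k) (use \<open>F\<^sub>0 \<in> \<F>\<close> next_set in \<open>auto simp: C_def\<close>)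
  have "(\<forall>k. closedin mtopology (C k)) \<and> (\<forall>k. C k \<noteq> {}) \<and> decseq C \<and>
      (\<forall>\<epsilon>>0. \<exists>k a. C k \<subseteq> mcball a \<epsilon>)"
  proof (intro conjI allI impI)
    show "closedin mtopology (C k)" "C k \<noteq> {}" for k using C_in closed nonempty by auto
    show "decseq C" using next_set C_in by (intro decseq_SucI) (simp add: C_Suc)
    fix \<epsilon> :: real assume "0 < \<epsilon>"
    then obtain k where "1 / Suc k < \<epsilon>" using nat_approx_posE by blast
    moreover obtain a where "C (Suc k) \<subseteq> mcball a (1 / Suc k)"
      using next_set[of "C k" k, OF C_in] by (auto simp: C_Suc)
    ultimately show "\<exists>k a. C k \<subseteq> mcball a \<epsilon>"
      using mcball_subset_concentric[of "1 / Suc k" \<epsilon>] by (meson less_imp_le order_trans)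
  qed
  then have "\<Inter> (range C) \<noteq> {}" using \<open>mcomplete\<close> mcomplete_nest by blast
  then obtain f where f: "\<And>k. f \<in> C k" by blast
  then obtain k where "f \<in> A k" using \<open>F\<^sub>0 \<subseteq> E\<close> E f[of 0] by (auto simp: C_def)
  with f[of "Suc k"] next_set[of "C k" k, OF C_in] show False by (auto simp: C_Suc)
qed


definition lp_cball_above ::
  "('a \<Rightarrow> real) \<Rightarrow> real \<Rightarrow> ('a \<Rightarrow> real) \<Rightarrow> ('a \<Rightarrow> complex) \<Rightarrow> real \<Rightarrow> ('a \<Rightarrow> complex) set" where
  "lp_cball_above w p h c r = {u \<in> lp_space w p. lp_dist w p c u \<le> r \<and> (\<forall>x. h x \<le> norm (u x))}"

context
  fixes w :: "'a \<Rightarrow> real" and p :: real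
  assumes w_pos: "\<And>x. 0 < w x" and p_ge_1: "1 \<le> p"
begin

lemma lp_weighted_summand_nonneg: "0 \<le> norm (u x) powr p * w x"
  using w_pos[of x] by simp

lemma lp_norm_zero_imp_zero:
  assumes "(\<lambda>x. norm (u x) powr p * w x) summable_on UNIV"
    and "(\<Sum>\<^sub>\<infinity>x. norm (u x) powr p * w x) = 0"
  shows "u x = 0"
proof -
  have "norm (u x) powr p * w x \<le> 0"
    using summand_le_infsum[OF assms(1)] lp_weighted_summand_nonneg assms(2) by metis
  then show ?thesis using w_pos[of x] p_ge_1 by (simp add: mult_le_0_iff)
qed

lemma lp_minkowski_pos:
  assumes su: "(\<lambda>x. norm (u x) powr p * w x) summable_on UNIV"
    and sv: "(\<lambda>x. norm (v x) powr p * w x) summable_on UNIV"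
  defines "Su \<equiv> \<Sum>\<^sub>\<infinity>x. norm (u x) powr p * w x" and "Sv \<equiv> \<Sum>\<^sub>\<infinity>x. norm (v x) powr p * w x"
  assumes "0 < Su" "0 < Sv"
  shows "(\<lambda>x. norm (u x + v x) powr p * w x) summable_on UNIV \<and>
    (\<Sum>\<^sub>\<infinity>x. norm (u x + v x) powr p * w x) powr (1/p) \<le> Su powr (1/p) + Sv powr (1/p)"
proof -
  define A where "A = Su powr (1/p)"
  define B where "B = Sv powr (1/p)"
  have "0 < A" "0 < B" using assms(5,6) by (auto simp: A_def B_def)
  have "A powr p = Su" "B powr p = Sv" using assms(5,6) p_ge_1 by (simp_all add: A_def B_def powr_powr)
  define R where "R x = (A + B) powr p *
    (A / (A + B) / Su * (norm (u x) powr p * w x) + B / (A + B) / Sv * (norm (v x) powr p * w x))" for x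
  have bound: "norm (u x + v x) powr p * w x \<le> R x" for x
  proof -
    have "norm (u x + v x) powr p \<le> (norm (u x) + norm (v x)) powr p"
      using p_ge_1 by (intro powr_mono2 norm_triangle_ineq) auto
    also have "\<dots> \<le> (A + B) powr p * (A / (A + B) * (norm (u x) / A) powr p + B / (A + B) * (norm (v x) / B) powr p)"
      by (rule powr_add_le_convex_split) (use p_ge_1 \<open>0 < A\<close> \<open>0 < B\<close> in auto)
    also have "\<dots> = (A + B) powr p * (A / (A + B) / Su * norm (u x) powr p + B / (A + B) / Sv * norm (v x) powr p)"
      using \<open>0 < A\<close> \<open>0 < B\<close> by (simp add: powr_divide \<open>A powr p = Su\<close> \<open>B powr p = Sv\<close>)
    finally have "norm (u x + v x) powr p * w x \<le> (A + B) powr p *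
        (A / (A + B) / Su * norm (u x) powr p + B / (A + B) / Sv * norm (v x) powr p) * w x"
      using w_pos[of x] by (intro mult_right_mono) auto
    then show ?thesis unfolding R_def by (simp add: algebra_simps)
  qed
  have sR: "R summable_on UNIV"
    unfolding R_def by (intro summable_on_cmult_right summable_on_add su sv)
  have s: "(\<lambda>x. norm (u x + v x) powr p * w x) summable_on UNIV"
    by (rule summable_on_comparison_test[OF sR]) (use bound lp_weighted_summand_nonneg in auto)
  have "infsum R UNIV = (A + B) powr p * (A / (A + B) / Su * Su + B / (A + B) / Sv * Sv)"
    unfolding R_def Su_def Sv_def
    by (subst infsum_cmult_right infsum_add infsum_cmult_right; (intro summable_on_cmult_right summable_on_add su sv)?)+
      simp
  also have "\<dots> = (A + B) powr p"
    using assms(5,6) \<open>0 < A\<close> \<open>0 < B\<close> by (simp add: add_divide_distrib[symmetric])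
  finally have "(\<Sum>\<^sub>\<infinity>x. norm (u x + v x) powr p * w x) \<le> (A + B) powr p"
    using infsum_mono[OF s sR bound] by simp
  then have "(\<Sum>\<^sub>\<infinity>x. norm (u x + v x) powr p * w x) powr (1/p) \<le> ((A + B) powr p) powr (1/p)"
    using p_ge_1 by (intro powr_mono2) (auto intro: infsum_nonneg lp_weighted_summand_nonneg)
  also have "\<dots> = A + B" using \<open>0 < A\<close> \<open>0 < B\<close> p_ge_1 by (simp add: powr_powr)
  finally show ?thesis using s by (simp add: A_def B_def)
qed

lemma lp_minkowski:
  assumes su: "(\<lambda>x. norm (u x) powr p * w x) summable_on UNIV"
    and sv: "(\<lambda>x. norm (v x) powr p * w x) summable_on UNIV"
  shows "(\<lambda>x. norm (u x + v x) powr p * w x) summable_on UNIV \<and>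
    (\<Sum>\<^sub>\<infinity>x. norm (u x + v x) powr p * w x) powr (1/p) \<le>
      (\<Sum>\<^sub>\<infinity>x. norm (u x) powr p * w x) powr (1/p) + (\<Sum>\<^sub>\<infinity>x. norm (v x) powr p * w x) powr (1/p)"
proof -
  define Su where "Su = (\<Sum>\<^sub>\<infinity>x. norm (u x) powr p * w x)"
  define Sv where "Sv = (\<Sum>\<^sub>\<infinity>x. norm (v x) powr p * w x)"
  have "0 \<le> Su" "0 \<le> Sv"
    unfolding Su_def Sv_def by (auto intro: infsum_nonneg lp_weighted_summand_nonneg)
  then consider "Su = 0" | "Sv = 0" | "0 < Su" "0 < Sv" by linarith
  then show ?thesis
  proof cases
    case 1
    then have "u = (\<lambda>_. 0)" using lp_norm_zero_imp_zero[OF su] by (auto simp: Su_def)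
    with sv 1 p_ge_1 show ?thesis by (simp add: Su_def)
  next
    case 2
    then have "v = (\<lambda>_. 0)" using lp_norm_zero_imp_zero[OF sv] by (auto simp: Sv_def)
    with su 2 p_ge_1 show ?thesis by (simp add: Sv_def)
  next
    case 3
    then show ?thesis using lp_minkowski_pos[OF su sv] by (simp add: Su_def Sv_def)
  qed
qed

lemma lp_space_diff:
  assumes "f \<in> lp_space w p" "g \<in> lp_space w p"
  shows "(\<lambda>x. f x - g x) \<in> lp_space w p"
  using lp_minkowski[of f "\<lambda>x. - g x"] assms by (simp add: lp_space_def)

lemma lp_dist_powr: "lp_dist w p f g powr p = (\<Sum>\<^sub>\<infinity>x. norm (f x - g x) powr p * w x)"
proof -
  have "0 \<le> (\<Sum>\<^sub>\<infinity>x. norm (f x - g x) powr p * w x)"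
    by (intro infsum_nonneg lp_weighted_summand_nonneg)
  then show ?thesis using p_ge_1 by (simp add: lp_dist_def powr_powr)
qed

lemma norm_le_lp_dist:
  assumes "f \<in> lp_space w p" "g \<in> lp_space w p"
  shows "norm (f x - g x) * w x powr (1/p) \<le> lp_dist w p f g"
proof -
  have "norm (f x - g x) powr p * w x \<le> (\<Sum>\<^sub>\<infinity>x. norm (f x - g x) powr p * w x)"
    using lp_space_diff[OF assms] unfolding lp_space_def
    by (intro summand_le_infsum lp_weighted_summand_nonneg) simp
  then have "(norm (f x - g x) powr p * w x) powr (1/p) \<le> lp_dist w p f g"
    unfolding lp_dist_def using p_ge_1 w_pos[of x] by (intro powr_mono2) auto
  then show ?thesis
    using p_ge_1 w_pos[of x] by (simp add: powr_mult powr_powr)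
qed

interpretation lp: Metric_space "lp_space w p" "lp_dist w p"
proof
  fix f g h
  show "0 \<le> lp_dist w p f g" by (simp add: lp_dist_def)
  show "lp_dist w p f g = lp_dist w p g f" by (simp add: lp_dist_def norm_minus_commute)
  assume f: "f \<in> lp_space w p" and g: "g \<in> lp_space w p"
  show "lp_dist w p f g = 0 \<longleftrightarrow> f = g"
  proof
    assume "lp_dist w p f g = 0"
    then have "norm (f x - g x) * w x powr (1/p) \<le> 0" for x
      using norm_le_lp_dist[OF f g] by metis
    then show "f = g" using w_pos by (simp add: mult_le_0_iff) (metis less_irrefl ext)
  qed (simp add: lp_dist_def)
  assume h: "h \<in> lp_space w p"
  show "lp_dist w p f h \<le> lp_dist w p f g + lp_dist w p g h"
    using lp_minkowski[of "\<lambda>x. f x - g x" "\<lambda>x. g x - h x"] lp_space_diff f g h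
    by (simp add: lp_space_def lp_dist_def)
qed

lemma lp_dist_le_if_norm_diff_le:
  assumes y: "y \<in> lp_space w p" and le: "\<And>x. norm (z x - y x) \<le> \<phi> x"
    and s\<phi>: "(\<lambda>x. \<phi> x powr p * w x) summable_on UNIV"
    and sum_le: "(\<Sum>\<^sub>\<infinity>x. \<phi> x powr p * w x) \<le> \<rho> powr p" and "0 \<le> \<rho>"
  shows "z \<in> lp_space w p \<and> lp_dist w p y z \<le> \<rho>"
proof -
  have bound: "norm (y x - z x) powr p * w x \<le> \<phi> x powr p * w x" for x
    using le[of x] p_ge_1 w_pos[of x]
    by (intro mult_right_mono powr_mono2) (auto simp: norm_minus_commute)
  have s: "(\<lambda>x. norm (y x - z x) powr p * w x) summable_on UNIV"
    by (rule summable_on_comparison_test[OF s\<phi>]) (use bound lp_weighted_summand_nonneg in auto)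
  then have "(\<lambda>x. y x - z x) \<in> lp_space w p" by (simp add: lp_space_def)
  from lp_space_diff[OF y this] have "z \<in> lp_space w p" by simp
  moreover have "lp_dist w p y z \<le> (\<rho> powr p) powr (1/p)"
    unfolding lp_dist_def using p_ge_1 infsum_mono[OF s s\<phi> bound] sum_le
    by (intro powr_mono2) (auto intro: infsum_nonneg lp_weighted_summand_nonneg)
  ultimately show ?thesis using \<open>0 \<le> \<rho>\<close> p_ge_1 by (simp add: powr_powr)
qed

lemma lp_dist_le_if_norm_diff_le_mult:
  assumes "a \<in> lp_space w p" "y \<in> lp_space w p" "0 \<le> K"
    and "\<And>x. norm (z x - y x) \<le> K * norm (a x - y x)"
  shows "z \<in> lp_space w p \<and> lp_dist w p y z \<le> K * lp_dist w p a y"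
proof (rule lp_dist_le_if_norm_diff_le)
  have s: "(\<lambda>x. norm (a x - y x) powr p * w x) summable_on UNIV"
    using lp_space_diff assms(1,2) by (simp add: lp_space_def)
  show "(\<lambda>x. (K * norm (a x - y x)) powr p * w x) summable_on UNIV"
    using summable_on_cmult_right[OF s, of "K powr p"] \<open>0 \<le> K\<close> by (simp add: powr_mult mult.assoc)
  have "(\<Sum>\<^sub>\<infinity>x. (K * norm (a x - y x)) powr p * w x) = K powr p * lp_dist w p a y powr p"
    using infsum_cmult_right[OF s, of "K powr p"] \<open>0 \<le> K\<close> by (simp add: powr_mult mult.assoc lp_dist_powr)
  then show "(\<Sum>\<^sub>\<infinity>x. (K * norm (a x - y x)) powr p * w x) \<le> (K * lp_dist w p a y) powr p"
    using \<open>0 \<le> K\<close> by (simp add: powr_mult)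
qed (use assms in auto)


lemma lp_norm_le_of_pointwise_limit:
  assumes lim: "\<And>x. (\<lambda>n. u n x) \<longlonglongrightarrow> v x"
    and bound: "\<And>n. N \<le> n \<Longrightarrow> (\<lambda>x. norm (u n x) powr p * w x) summable_on UNIV \<and>
                            (\<Sum>\<^sub>\<infinity>x. norm (u n x) powr p * w x) \<le> B"
  shows "(\<lambda>x. norm (v x) powr p * w x) summable_on UNIV \<and> (\<Sum>\<^sub>\<infinity>x. norm (v x) powr p * w x) \<le> B"
proof -
  have finite_sums: "(\<Sum>x\<in>F. norm (v x) powr p * w x) \<le> B" if "finite F" for F
  proof (rule LIMSEQ_le_const2)
    show "(\<lambda>n. \<Sum>x\<in>F. norm (u n x) powr p * w x) \<longlonglongrightarrow> (\<Sum>x\<in>F. norm (v x) powr p * w x)"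
      using p_ge_1 by (intro tendsto_sum tendsto_mult_right tendsto_powr2 tendsto_norm lim) auto
    show "\<exists>N. \<forall>n\<ge>N. (\<Sum>x\<in>F. norm (u n x) powr p * w x) \<le> B"
    proof (intro exI allI impI)
      fix n assume "N \<le> n"
      have "(\<Sum>x\<in>F. norm (u n x) powr p * w x) \<le> (\<Sum>\<^sub>\<infinity>x. norm (u n x) powr p * w x)"
        using bound[OF \<open>N \<le> n\<close>] that by (intro finite_sum_le_infsum lp_weighted_summand_nonneg) auto
      then show "(\<Sum>x\<in>F. norm (u n x) powr p * w x) \<le> B" using bound[OF \<open>N \<le> n\<close>] by linarith
    qed
  qed
  then show ?thesis by (rule nonneg_summable_infsum_le[OF lp_weighted_summand_nonneg])
qed

lemma lp_limit_imp_pointwise_limit: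
  assumes "limitin lp.mtopology \<sigma> f sequentially"
  shows "(\<lambda>n. \<sigma> n x) \<longlonglongrightarrow> f x"
proof (rule LIMSEQ_I)
  fix \<epsilon> :: real assume "0 < \<epsilon>"
  have "0 < w x powr (1/p)" using w_pos[of x] by simp
  then obtain N where N: "\<forall>n\<ge>N. \<sigma> n \<in> lp_space w p \<and> lp_dist w p (\<sigma> n) f < \<epsilon> * w x powr (1/p)"
    using assms \<open>0 < \<epsilon>\<close> unfolding lp.limit_metric_sequentially by (meson mult_pos_pos)
  have "norm (\<sigma> n x - f x) < \<epsilon>" if "N \<le> n" for n
  proof -
    have "norm (\<sigma> n x - f x) * w x powr (1/p) < \<epsilon> * w x powr (1/p)"
      using norm_le_lp_dist[of "\<sigma> n" f x] N that assms lp.limitin_mspace by fastforce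
    then show ?thesis using \<open>0 < w x powr (1/p)\<close> by simp
  qed
  then show "\<exists>N. \<forall>n\<ge>N. norm (\<sigma> n x - f x) < \<epsilon>" by blast
qed


lemma lp_MCauchy_imp_pointwise_Cauchy:
  assumes "lp.MCauchy \<sigma>"
  shows "Cauchy (\<lambda>n. \<sigma> n x)"
proof (rule metric_CauchyI)
  fix \<epsilon> :: real assume "0 < \<epsilon>"
  have "0 < w x powr (1/p)" using w_pos[of x] by simp
  then obtain N where N: "\<forall>m n. N \<le> m \<longrightarrow> N \<le> n \<longrightarrow> lp_dist w p (\<sigma> m) (\<sigma> n) < \<epsilon> * w x powr (1/p)"
    using assms \<open>0 < \<epsilon>\<close> unfolding lp.MCauchy_def by (meson mult_pos_pos)
  have "dist (\<sigma> m x) (\<sigma> n x) < \<epsilon>" if "N \<le> m" "N \<le> n" for m n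
  proof -
    have "\<sigma> m \<in> lp_space w p" "\<sigma> n \<in> lp_space w p"
      using assms unfolding lp.MCauchy_def by auto
    then have "norm (\<sigma> m x - \<sigma> n x) * w x powr (1/p) < \<epsilon> * w x powr (1/p)"
      using norm_le_lp_dist[of "\<sigma> m" "\<sigma> n" x] N that by fastforce
    then show ?thesis using \<open>0 < w x powr (1/p)\<close> by (simp add: dist_norm)
  qed
  then show "\<exists>N. \<forall>m\<ge>N. \<forall>n\<ge>N. dist (\<sigma> m x) (\<sigma> n x) < \<epsilon>" by blast
qed

lemma lp_dist_pointwise_limit_le:
  assumes \<sigma>: "\<And>n. \<sigma> n \<in> lp_space w p" and lim: "\<And>x. (\<lambda>n. \<sigma> n x) \<longlonglongrightarrow> f x"
    and close: "\<And>n. N \<le> n \<Longrightarrow> lp_dist w p (\<sigma> m) (\<sigma> n) \<le> \<epsilon>"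
  shows "f \<in> lp_space w p \<and> lp_dist w p (\<sigma> m) f \<le> \<epsilon>"
proof -
  have "(\<lambda>x. norm (\<sigma> m x - f x) powr p * w x) summable_on UNIV \<and>
      (\<Sum>\<^sub>\<infinity>x. norm (\<sigma> m x - f x) powr p * w x) \<le> \<epsilon> powr p"
  proof (rule lp_norm_le_of_pointwise_limit[where u = "\<lambda>n x. \<sigma> m x - \<sigma> n x" and N = N])
    show "(\<lambda>n. \<sigma> m x - \<sigma> n x) \<longlonglongrightarrow> \<sigma> m x - f x" for x
      by (intro tendsto_diff tendsto_const lim)
    fix n assume "N \<le> n"
    then have "lp_dist w p (\<sigma> m) (\<sigma> n) powr p \<le> \<epsilon> powr p"
      using close p_ge_1 by (intro powr_mono2) auto
    then show "(\<lambda>x. norm (\<sigma> m x - \<sigma> n x) powr p * w x) summable_on UNIV \<and>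
        (\<Sum>\<^sub>\<infinity>x. norm (\<sigma> m x - \<sigma> n x) powr p * w x) \<le> \<epsilon> powr p"
      using lp_space_diff[OF \<sigma> \<sigma>] by (simp add: lp_space_def lp_dist_powr)
  qed
  moreover have "0 \<le> \<epsilon>" using close[of N] lp.nonneg order_trans by blast
  ultimately show ?thesis
    by (intro lp_dist_le_if_norm_diff_le[OF \<sigma>]) (auto simp: norm_minus_commute)
qed

lemma lp_mcomplete: "lp.mcomplete"
  unfolding lp.mcomplete_def
proof (intro allI impI)
  fix \<sigma> assume "lp.MCauchy \<sigma>"
  then have \<sigma>: "\<And>n. \<sigma> n \<in> lp_space w p"
    and cauchy: "\<And>\<epsilon>. 0 < \<epsilon> \<Longrightarrow> \<exists>N. \<forall>m n. N \<le> m \<longrightarrow> N \<le> n \<longrightarrow> lp_dist w p (\<sigma> m) (\<sigma> n) < \<epsilon>"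
    unfolding lp.MCauchy_def by auto
  obtain f where f: "\<And>x. (\<lambda>n. \<sigma> n x) \<longlonglongrightarrow> f x"
    using lp_MCauchy_imp_pointwise_Cauchy[OF \<open>lp.MCauchy \<sigma>\<close>]
    unfolding Cauchy_convergent_iff convergent_def by metis
  have eventually_close: "\<exists>N. \<forall>m\<ge>N. f \<in> lp_space w p \<and> lp_dist w p (\<sigma> m) f \<le> \<epsilon>" if "0 < \<epsilon>" for \<epsilon>
    using cauchy[OF that] lp_dist_pointwise_limit_le[OF \<sigma> f] by (meson less_imp_le)
  show "\<exists>f. limitin lp.mtopology \<sigma> f sequentially"
    unfolding lp.limit_metric_sequentially
  proof (rule exI[of _ f], intro conjI allI impI)
    show "f \<in> lp_space w p" using eventually_close[of 1] by auto
    fix \<epsilon> :: real assume "0 < \<epsilon>"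
    then show "\<exists>N. \<forall>n\<ge>N. \<sigma> n \<in> lp_space w p \<and> lp_dist w p (\<sigma> n) f < \<epsilon>"
      using eventually_close[of "\<epsilon> / 2"] \<sigma> by fastforce
  qed
qed

lemma closedin_lp_modulus_ge: "closedin lp.mtopology {u \<in> lp_space w p. \<forall>x. h x \<le> norm (u x)}"
  unfolding lp.metric_closedin_iff_sequentially_closed
proof (intro conjI allI impI)
  fix \<sigma> f
  assume \<sigma>: "range \<sigma> \<subseteq> {u \<in> lp_space w p. \<forall>x. h x \<le> norm (u x)} \<and> limitin lp.mtopology \<sigma> f sequentially"
  have "h x \<le> norm (f x)" for x
    using \<sigma> lp_limit_imp_pointwise_limit[of \<sigma> f x]
    by (intro LIMSEQ_le_const[OF tendsto_norm]) auto
  then show "f \<in> {u \<in> lp_space w p. \<forall>x. h x \<le> norm (u x)}"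
    using \<sigma> lp.limitin_mspace by blast
qed auto

lemma closedin_lp_cball_above:
  assumes "c \<in> lp_space w p"
  shows "closedin lp.mtopology (lp_cball_above w p h c r)"
proof -
  have "lp_cball_above w p h c r = lp.mcball c r \<inter> {u \<in> lp_space w p. \<forall>x. h x \<le> norm (u x)}"
    using assms by (auto simp: lp_cball_above_def)
  then show ?thesis using closedin_lp_modulus_ge by auto
qed


lemma lp_minorant_summable:
  assumes "c \<in> lp_space w p" "\<And>x. 0 \<le> h x" "\<And>x. h x \<le> norm (c x)"
  shows "(\<lambda>x. h x powr p * w x) summable_on UNIV"
proof (rule summable_on_comparison_test)
  show "(\<lambda>x. norm (c x) powr p * w x) summable_on UNIV" using assms(1) by (simp add: lp_space_def)
  show "h x powr p * w x \<le> norm (c x) powr p * w x" for x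
    using assms(2,3)[of x] w_pos[of x] p_ge_1 by (intro mult_right_mono powr_mono2) auto
qed (use w_pos in \<open>simp add: less_imp_le\<close>)

text \<open>
  A margin \<open>\<kappa> h\<close> alone would not be small in \<open>\<ell>\<^sup>p\<close>. It is kept only off a finite set \<open>S\<close>
  carrying most of the mass of \<open>h\<close>; on \<open>S\<close>, where closeness in \<open>\<ell>\<^sup>p\<close> forces pointwise
  closeness, a constant margin \<open>\<eta>\<close> is used instead.
\<close>

lemma lp_margin_exists:
  assumes H_summable: "(\<lambda>x. h x powr p * w x) summable_on UNIV" and h: "\<And>x. 0 \<le> h x"
    and "0 \<le> \<kappa>" "0 < \<rho>"
  obtains S \<eta> where "finite S" "0 < \<eta>"
    "(\<lambda>x. (if x \<in> S then \<eta> else \<kappa> * h x) powr p * w x) summable_on UNIV"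
    "(\<Sum>\<^sub>\<infinity>x. (if x \<in> S then \<eta> else \<kappa> * h x) powr p * w x) \<le> \<rho> powr p"
proof -
  define H where "H x = h x powr p * w x" for x
  have H_nonneg: "0 \<le> H x" for x using w_pos[of x] by (simp add: H_def)
  define k where "k = \<kappa> powr p"
  have "0 \<le> k" by (simp add: k_def)
  then have "0 < \<rho> powr p / (2 * (k + 1))"
    using \<open>0 < \<rho>\<close> by (intro divide_pos_pos) auto
  then obtain S where "finite S"
    and tail: "\<And>F. finite F \<Longrightarrow> sum H (F - S) \<le> \<rho> powr p / (2 * (k + 1))"
    using summable_on_small_tail[OF H_summable[folded H_def] H_nonneg] by metis
  define \<eta> where "\<eta> = (\<rho> powr p / (2 * (sum w S + 1))) powr (1/p)"
  have "0 \<le> sum w S" using w_pos by (simp add: sum_nonneg less_imp_le)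
  then have "0 < \<eta>" and \<eta>_powr: "\<eta> powr p = \<rho> powr p / (2 * (sum w S + 1))"
    using \<open>0 < \<rho>\<close> p_ge_1 by (simp_all add: \<eta>_def powr_powr)
  define \<phi> where "\<phi> x = (if x \<in> S then \<eta> else \<kappa> * h x)" for x
  have finite_sums: "(\<Sum>x\<in>F. \<phi> x powr p * w x) \<le> \<rho> powr p" if "finite F" for F
  proof -
    have "(\<Sum>x\<in>F \<inter> S. \<phi> x powr p * w x) = (\<Sum>x\<in>F \<inter> S. \<eta> powr p * w x)"
      by (rule sum.cong) (auto simp: \<phi>_def)
    also have "\<dots> = \<eta> powr p * sum w (F \<inter> S)"
      by (simp add: sum_distrib_left)
    also have "\<dots> \<le> \<eta> powr p * sum w S"
      using \<open>finite S\<close> w_pos by (intro mult_left_mono sum_mono2) (auto simp: less_imp_le)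
    also have "\<dots> \<le> \<rho> powr p / 2"
      using \<open>0 \<le> sum w S\<close> by (simp add: \<eta>_powr field_simps)
    finally have on_S: "(\<Sum>x\<in>F \<inter> S. \<phi> x powr p * w x) \<le> \<rho> powr p / 2" .
    have "(\<Sum>x\<in>F - S. \<phi> x powr p * w x) = (\<Sum>x\<in>F - S. k * H x)"
      by (rule sum.cong) (use \<open>0 \<le> \<kappa>\<close> h in \<open>auto simp: \<phi>_def H_def k_def powr_mult\<close>)
    also have "\<dots> = k * sum H (F - S)"
      by (simp add: sum_distrib_left)
    also have "\<dots> \<le> (k + 1) * sum H (F - S)"
      using sum_nonneg[of "F - S" H] H_nonneg by (simp add: distrib_right)
    also have "\<dots> \<le> (k + 1) * (\<rho> powr p / (2 * (k + 1)))"
      using \<open>0 \<le> k\<close> by (intro mult_left_mono tail[OF that]) simp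
    also have "\<dots> = \<rho> powr p / 2"
      using \<open>0 \<le> k\<close> by (simp add: field_simps)
    finally show ?thesis
      using on_S sum.Int_Diff[OF that, of "\<lambda>x. \<phi> x powr p * w x" S] by linarith
  qed
  have "0 \<le> \<phi> x powr p * w x" for x using w_pos[of x] by simp
  then show ?thesis
    using that[OF \<open>finite S\<close> \<open>0 < \<eta>\<close>] nonneg_summable_infsum_le[OF _ finite_sums]
    unfolding \<phi>_def by blast
qed

lemma lp_radial_shift:
  assumes c: "c \<in> lp_space w p" and "\<And>x. 0 \<le> \<phi> x"
    and "(\<lambda>x. \<phi> x powr p * w x) summable_on UNIV" "(\<Sum>\<^sub>\<infinity>x. \<phi> x powr p * w x) \<le> \<rho> powr p" "0 \<le> \<rho>"
  obtains b where "b \<in> lp_space w p" "lp_dist w p c b \<le> \<rho>" "\<And>x. norm (b x) = norm (c x) + \<phi> x"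
proof -
  define b where "b x = rcis (norm (c x) + \<phi> x) (Arg (c x))" for x
  have "norm (b x) = norm (c x) + \<phi> x" "norm (b x - c x) \<le> \<phi> x" for x
    using assms(2)[of x] by (simp_all add: b_def norm_rcis_Arg_diff)
  with assms that show ?thesis using lp_dist_le_if_norm_diff_le[OF c] by blast
qed

lemma lp_dist_small_imp_close_on_finite:
  assumes "finite S" "0 < \<eta>"
  obtains \<delta> where "0 < \<delta>" "\<And>f g x. f \<in> lp_space w p \<Longrightarrow> g \<in> lp_space w p \<Longrightarrow>
    lp_dist w p f g < \<delta> \<Longrightarrow> x \<in> S \<Longrightarrow> norm (f x - g x) < \<eta>"
proof
  define m where "m = Min (insert 1 (w ` S))"
  have "0 < m" using assms(1) w_pos by (simp add: m_def)
  then show "0 < \<eta> * m powr (1/p)" using assms(2) by simp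
  fix f g x assume "f \<in> lp_space w p" "g \<in> lp_space w p" "lp_dist w p f g < \<eta> * m powr (1/p)" "x \<in> S"
  then have "norm (f x - g x) * w x powr (1/p) < \<eta> * m powr (1/p)"
    using norm_le_lp_dist[of f g x] by linarith
  also have "\<dots> \<le> \<eta> * w x powr (1/p)"
    using \<open>x \<in> S\<close> assms \<open>0 < m\<close> p_ge_1 by (intro mult_left_mono powr_mono2) (auto simp: m_def)
  finally show "norm (f x - g x) < \<eta>" using w_pos[of x] by simp
qed

lemma lp_modulus_raise:
  assumes "a \<in> lp_space w p" "y \<in> lp_space w p" "0 \<le> K"
    and deficit: "\<And>x. h x - norm (y x) \<le> K * norm (a x - y x)"
  obtains z where "z \<in> lp_space w p" "\<And>x. h x \<le> norm (z x)" "lp_dist w p y z \<le> K * lp_dist w p a y"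
proof -
  define z where "z x = rcis (max (h x) (norm (y x))) (Arg (y x))" for x
  have "norm (z x - y x) \<le> K * norm (a x - y x)" for x
    using deficit[of x] \<open>0 \<le> K\<close> by (simp add: z_def norm_rcis_Arg_diff max_def)
  moreover have "h x \<le> norm (z x)" for x by (simp add: z_def)
  ultimately show ?thesis using lp_dist_le_if_norm_diff_le_mult assms that by blast
qed


lemma lp_cball_above_in_porosity_hole:
  assumes "0 \<le> K" "K \<le> 1" "K < lam"
    and porous: "lambda_porous_at (lp_dist w p) (lp_space w p) lam A a"
    and a: "a \<in> lp_space w p" and "0 < \<delta>"
    and deficit: "\<And>y x. y \<in> lp_space w p \<Longrightarrow> lp_dist w p a y < \<delta> \<Longrightarrow>
                    h x - norm (y x) \<le> K * norm (a x - y x)"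
  obtains z r where "z \<in> lp_space w p" "\<And>x. h x \<le> norm (z x)" "0 < r"
    "lp_cball_above w p h z r \<inter> A = {}" "lp_cball_above w p h z r \<subseteq> lp_cball_above w p h a (3 * \<delta>)"
proof -
  obtain y where y: "y \<in> lp_space w p" "lp_dist w p a y < \<delta>" "y \<noteq> a"
    and hole: "{u \<in> lp_space w p. lp_dist w p y u < lam * lp_dist w p a y} \<inter> A = {}"
    using porous \<open>0 < \<delta>\<close> unfolding lambda_porous_at_def by blast
  define t where "t = lp_dist w p a y"
  have "0 < t" using a y lp.mdist_pos_less by (simp add: t_def)
  obtain z where z: "z \<in> lp_space w p" "\<And>x. h x \<le> norm (z x)" "lp_dist w p y z \<le> K * t"
    using lp_modulus_raise[OF a y(1) \<open>0 \<le> K\<close> deficit[OF y(1,2)]] unfolding t_def by blast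
  have "lp_dist w p y z < lam * t" "lp_dist w p y z \<le> t"
    using z(3) \<open>0 < t\<close> \<open>K < lam\<close> \<open>K \<le> 1\<close> mult_strict_right_mono[of K lam t] mult_right_mono[of K 1 t]
    by linarith+
  define r where "r = min \<delta> ((lam * t - lp_dist w p y z) / 2)"
  have "0 < r" using \<open>0 < \<delta>\<close> \<open>lp_dist w p y z < lam * t\<close> by (simp add: r_def)
  have near_y: "lp_dist w p y u < lam * t" and near_a: "lp_dist w p a u < 3 * \<delta>"
    if "u \<in> lp_cball_above w p h z r" for u
  proof -
    from that have u: "u \<in> lp_space w p" "lp_dist w p z u \<le> r" by (auto simp: lp_cball_above_def)
    have "lp_dist w p y u \<le> lp_dist w p y z + lp_dist w p z u" using y(1) z(1) u(1) by (rule lp.triangle)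
    then show "lp_dist w p y u < lam * t"
      using u(2) \<open>lp_dist w p y z < lam * t\<close> by (simp add: r_def)
    have "lp_dist w p a u \<le> lp_dist w p a y + lp_dist w p y u" using a y(1) u(1) by (rule lp.triangle)
    then show "lp_dist w p a u < 3 * \<delta>"
      using \<open>lp_dist w p y u \<le> lp_dist w p y z + lp_dist w p z u\<close> u(2) y(2)
        \<open>lp_dist w p y z \<le> t\<close> by (simp add: r_def t_def)
  qed
  show ?thesis
  proof (rule that[OF z(1,2) \<open>0 < r\<close>])
    show "lp_cball_above w p h z r \<inter> A = {}"
      using hole near_y by (auto simp: lp_cball_above_def t_def)
    show "lp_cball_above w p h z r \<subseteq> lp_cball_above w p h a (3 * \<delta>)"
      using near_a by (auto simp: lp_cball_above_def less_imp_le)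
  qed
qed


lemma lp_deficit_near_margin:
  assumes "finite S" "0 < \<eta>" "1 \<le> \<kappa>" "\<And>x. 0 \<le> h x" "a \<in> lp_space w p"
    and margin: "\<And>x. h x + (if x \<in> S then \<eta> else \<kappa> * h x) \<le> norm (a x)"
  obtains \<delta> where "0 < \<delta>" "\<And>y x. y \<in> lp_space w p \<Longrightarrow> lp_dist w p a y < \<delta> \<Longrightarrow>
    h x - norm (y x) \<le> 1 / \<kappa> * norm (a x - y x)"
proof -
  obtain \<delta> where "0 < \<delta>" and close_on_S: "\<And>f g x. f \<in> lp_space w p \<Longrightarrow> g \<in> lp_space w p \<Longrightarrow>
      lp_dist w p f g < \<delta> \<Longrightarrow> x \<in> S \<Longrightarrow> norm (f x - g x) < \<eta>"
    using lp_dist_small_imp_close_on_finite[OF \<open>finite S\<close> \<open>0 < \<eta>\<close>] by blast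
  have "h x - norm (y x) \<le> 1 / \<kappa> * norm (a x - y x)"
    if "y \<in> lp_space w p" "lp_dist w p a y < \<delta>" for y x
  proof (cases "x \<in> S")
    case True
    then have "norm (a x - y x) < \<eta>" using close_on_S \<open>a \<in> lp_space w p\<close> that by blast
    moreover have "norm (a x) \<le> norm (a x - y x) + norm (y x)"
      using norm_triangle_ineq[of "a x - y x" "y x"] by simp
    moreover have "0 \<le> 1 / \<kappa> * norm (a x - y x)" using \<open>1 \<le> \<kappa>\<close> by simp
    ultimately show ?thesis using margin[of x] True by simp
  next
    case False
    then show ?thesis
      using margin[of x] assms(3,4) by (intro modulus_deficit_le) (auto simp: algebra_simps)
  qed
  with \<open>0 < \<delta>\<close> that show ?thesis by blast
qed

lemma lp_cball_above_subset:
  assumes "c \<in> lp_space w p" "c' \<in> lp_space w p" "\<And>x. h x \<le> h' x" "lp_dist w p c c' + r' \<le> r"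
  shows "lp_cball_above w p h' c' r' \<subseteq> lp_cball_above w p h c r"
proof
  fix u assume u: "u \<in> lp_cball_above w p h' c' r'"
  then have "lp_dist w p c u \<le> lp_dist w p c c' + lp_dist w p c' u"
    using assms(1,2) lp.triangle by (simp add: lp_cball_above_def)
  then show "u \<in> lp_cball_above w p h c r"
    using u assms(3,4) by (auto simp: lp_cball_above_def intro: order_trans)
qed

lemma lp_cball_above_avoiding_porous:
  assumes "0 < lam" and porous: "lambda_porous (lp_dist w p) (lp_space w p) lam A"
    and c: "c \<in> lp_space w p" and h: "\<And>x. 0 \<le> h x" "\<And>x. h x \<le> norm (c x)" and "0 < r"
  obtains h' c' r' where "c' \<in> lp_space w p" "\<And>x. h x \<le> h' x" "\<And>x. h' x \<le> norm (c' x)" "0 < r'"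
    "lp_cball_above w p h' c' r' \<subseteq> lp_cball_above w p h c r" "lp_cball_above w p h' c' r' \<inter> A = {}"
proof -
  \<comment> \<open>the deficit factor \<open>1 / \<kappa> = \<lambda> / (1 + \<lambda>)\<close> stays below \<open>\<lambda>\<close>\<close>
  define \<kappa> where "\<kappa> = 1 + 1 / lam"
  have "1 \<le> \<kappa>" "1 / \<kappa> < lam" using \<open>0 < lam\<close> by (simp_all add: \<kappa>_def field_simps)
  obtain S \<eta> where "finite S" "0 < \<eta>"
    and margin: "(\<lambda>x. (if x \<in> S then \<eta> else \<kappa> * h x) powr p * w x) summable_on UNIV"
      "(\<Sum>\<^sub>\<infinity>x. (if x \<in> S then \<eta> else \<kappa> * h x) powr p * w x) \<le> (r / 4) powr p"
    using lp_margin_exists[OF lp_minorant_summable[OF c h] h(1), of \<kappa> "r / 4"] \<open>1 \<le> \<kappa>\<close> \<open>0 < r\<close> by auto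
  define h' where "h' x = h x + (if x \<in> S then \<eta> else \<kappa> * h x)" for x
  have "0 \<le> (if x \<in> S then \<eta> else \<kappa> * h x)" for x using \<open>0 < \<eta>\<close> \<open>1 \<le> \<kappa>\<close> h(1)[of x] by simp
  moreover have "0 \<le> r / 4" using \<open>0 < r\<close> by simp
  ultimately obtain b where b: "b \<in> lp_space w p" "lp_dist w p c b \<le> r / 4"
    and "\<And>x. norm (b x) = norm (c x) + (if x \<in> S then \<eta> else \<kappa> * h x)"
    using lp_radial_shift[OF c _ margin] by blast
  then have h'_le_b: "h' x \<le> norm (b x)" for x using h(2)[of x] by (simp add: h'_def)
  have h_le_h': "h x \<le> h' x" for x using \<open>0 < \<eta>\<close> \<open>1 \<le> \<kappa>\<close> h(1)[of x] by (simp add: h'_def)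
  show ?thesis
  proof (cases "lp_cball_above w p h' b (r / 4) \<inter> A = {}")
    case True
    then show ?thesis using lp_cball_above_subset[OF c b(1) h_le_h'] b(2) \<open>0 < r\<close>
      by (intro that[OF b(1) h_le_h' h'_le_b, of "r / 4"]) auto
  next
    case False
    then obtain a where "a \<in> A" and a: "a \<in> lp_space w p" "lp_dist w p b a \<le> r / 4" "\<And>x. h' x \<le> norm (a x)"
      by (auto simp: lp_cball_above_def)
    obtain \<delta>\<^sub>a where "0 < \<delta>\<^sub>a" and deficit_a: "\<And>y x. y \<in> lp_space w p \<Longrightarrow> lp_dist w p a y < \<delta>\<^sub>a \<Longrightarrow>
        h x - norm (y x) \<le> 1 / \<kappa> * norm (a x - y x)"
      using lp_deficit_near_margin[where h=h, OF \<open>finite S\<close> \<open>0 < \<eta>\<close> \<open>1 \<le> \<kappa>\<close> h(1) a(1)]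
        a(3)[unfolded h'_def] by blast
    define \<delta> where "\<delta> = min (r / 6) \<delta>\<^sub>a"
    have deficit: "h x - norm (y x) \<le> 1 / \<kappa> * norm (a x - y x)"
      if "y \<in> lp_space w p" "lp_dist w p a y < \<delta>" for y x
      using deficit_a that by (simp add: \<delta>_def)
    have "0 < \<delta>" using \<open>0 < r\<close> \<open>0 < \<delta>\<^sub>a\<close> by (simp add: \<delta>_def)
    moreover have "lambda_porous_at (lp_dist w p) (lp_space w p) lam A a"
      using porous \<open>a \<in> A\<close> by (simp add: lambda_porous_def)
    moreover have "0 \<le> 1 / \<kappa>" "1 / \<kappa> \<le> 1" using \<open>1 \<le> \<kappa>\<close> by simp_all
    ultimately obtain z r' where z: "z \<in> lp_space w p" "\<And>x. h x \<le> norm (z x)" "0 < r'"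
      and hole: "lp_cball_above w p h z r' \<inter> A = {}"
      and near_a: "lp_cball_above w p h z r' \<subseteq> lp_cball_above w p h a (3 * \<delta>)"
      using lp_cball_above_in_porosity_hole[of "1 / \<kappa>" lam A a \<delta> h] \<open>1 / \<kappa> < lam\<close> a(1) deficit
      by blast
    have "lp_dist w p c a + 3 * \<delta> \<le> r"
      using lp.triangle[OF c b(1) a(1)] b(2) a(2) by (simp add: \<delta>_def)
    then have "lp_cball_above w p h a (3 * \<delta>) \<subseteq> lp_cball_above w p h c r"
      by (rule lp_cball_above_subset[OF c a(1) order_refl])
    with near_a hole show ?thesis using that[OF z(1) order_refl z(2,3)] by blast
  qed
qed

lemma lp_modulus_ge_not_sigma_lambda_porous:
  assumes g: "g \<in> lp_space w p" and "0 < lam"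
  shows "\<not> sigma_lambda_porous (lp_dist w p) (lp_space w p) lam
           {f \<in> lp_space w p. \<forall>x. norm (g x) \<le> norm (f x)}"
proof -
  define \<F> where "\<F> = {lp_cball_above w p h c r | h c r.
    c \<in> lp_space w p \<and> (\<forall>x. norm (g x) \<le> h x \<and> h x \<le> norm (c x)) \<and> 0 < r}"
  have centre_in: "c \<in> lp_cball_above w p h c r"
    if "c \<in> lp_space w p" "\<forall>x. h x \<le> norm (c x)" "0 < r" for h c r
    using that by (simp add: lp_cball_above_def)
  have shrink: "\<exists>F'\<in>\<F>. F' \<subseteq> F \<and> F' \<inter> A = {} \<and> (\<exists>a. F' \<subseteq> lp.mcball a \<epsilon>)"
    if "F \<in> \<F>" "lambda_porous (lp_dist w p) (lp_space w p) lam A" "0 < \<epsilon>" for F A \<epsilon>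
  proof -
    obtain h c r where F: "F = lp_cball_above w p h c r" and c: "c \<in> lp_space w p"
      and h: "\<And>x. norm (g x) \<le> h x" "\<And>x. h x \<le> norm (c x)" and "0 < r"
      using \<open>F \<in> \<F>\<close> by (auto simp: \<F>_def)
    have "\<And>x. 0 \<le> h x" using h(1) norm_ge_zero order_trans by blast
    with \<open>0 < lam\<close> that(2) c h(2) obtain h' c' r' where "c' \<in> lp_space w p"
      and "\<And>x. h x \<le> h' x" "\<And>x. h' x \<le> norm (c' x)" "0 < r'"
      and sub: "lp_cball_above w p h' c' r' \<subseteq> lp_cball_above w p h c (min r \<epsilon>)"
      and disj: "lp_cball_above w p h' c' r' \<inter> A = {}"
      using lp_cball_above_avoiding_porous[of lam A c h "min r \<epsilon>"] \<open>0 < r\<close> \<open>0 < \<epsilon>\<close> by (metis min_less_iff_conj)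
    then have "lp_cball_above w p h' c' r' \<in> \<F>"
      using h(1) unfolding \<F>_def by (blast intro: order_trans)
    moreover have "lp_cball_above w p h c (min r \<epsilon>) \<subseteq> F \<inter> lp.mcball c \<epsilon>"
      using c by (auto simp: F lp_cball_above_def)
    ultimately show ?thesis using sub disj by blast
  qed
  show ?thesis
  proof (rule lp.not_sigma_lambda_porous_if_shrinking[OF lp_mcomplete _ _ _ _ shrink])
    show "lp_cball_above w p (\<lambda>x. norm (g x)) g 1 \<in> \<F>"
      unfolding \<F>_def using g by (intro CollectI exI[of _ "\<lambda>x. norm (g x)"] exI[of _ g] exI[of _ 1]) simp
    show "lp_cball_above w p (\<lambda>x. norm (g x)) g 1 \<subseteq> {f \<in> lp_space w p. \<forall>x. norm (g x) \<le> norm (f x)}"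
      by (auto simp: lp_cball_above_def)
    fix F assume "F \<in> \<F>"
    then obtain h c r where "F = lp_cball_above w p h c r" "c \<in> lp_space w p"
      "\<forall>x. h x \<le> norm (c x)" "0 < r"
      unfolding \<F>_def by blast
    then show "closedin lp.mtopology F" "F \<noteq> {}"
      using closedin_lp_cball_above centre_in by blast+
  qed
qed

end

lemma haar_weight_pos:
  assumes "discrete_hypergroup c iv e"
  shows "0 < haar_weight c iv e x"
proof -
  have "c x (iv x) e \<noteq> 0" "0 \<le> c x (iv x) e"
    using assms unfolding discrete_hypergroup_def by metis+
  then show ?thesis by (simp add: haar_weight_def)
qed

theorem proposition3p10:
  fixes c :: "'a \<Rightarrow> 'a \<Rightarrow> 'a \<Rightarrow> real" and iv :: "'a \<Rightarrow> 'a" and e :: 'a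
    and p :: real and g :: "'a \<Rightarrow> complex"
  assumes "discrete_hypergroup c iv e"
    and "1 \<le> p"
    and "g \<in> lp_space (haar_weight c iv e) p"
  shows "\<not> sigma_porous (lp_dist (haar_weight c iv e) p) (lp_space (haar_weight c iv e) p)
           {f \<in> lp_space (haar_weight c iv e) p. \<forall>x. norm (g x) \<le> norm (f x)}"
  unfolding sigma_porous_def
  using lp_modulus_ge_not_sigma_lambda_porous[OF haar_weight_pos[OF assms(1)] assms(2,3)] by blast

end
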